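(* Let $M$ be a finitely presented $n$-parameter persistence module. For all $j\geq1$, if $\vec s\in\xi_{j+1}(M)$ then there exist $\vec r_i\in\xi_j(M)$ such that $\vec s=\bigvee_i\vec r_i$. Consequently, for each coordinate $k\in\{1,\dots,n\}$ the set of $k$-th coordinates of points of $\bigcup_i\xi_i(M)$ equals the set of $k$-th coordinates of points of $\xi_0(M)\cup\xi_1(M)$; i.e. the multiparameter Betti grid of $M$ is determined by $\xi_0(M)\cup\xi_1(M)$.
   Context: Modules are $\mathbb{R}^n$-graded modules over $P_n$, the monoid ring over a field $\mathbb{F}$ of $([0,\infty)^n,+)$; finitely presented means a quotient of a finitely generated free graded module by a finitely generated homogeneous submodule. Let $I\subset P_n$ be the ideal generated by the monomials $\vec x^{\vec a}$, $\vec a\neq0$. $\xi_i(M)(\vec a)=\dim_{\mathbb F}\mathrm{Tor}_i^{P_n}(M,P_n/I)_{\vec a}$, and $\xi_i(M)$ is identified with its support, i.e. the set of grades of generators of the $i$-th term of a minimal free resolution of $M$. $\vee$ denotes the join (coordinatewise maximum) in $\mathbb{R}^n$. The multiparameter Betti grid of $M$ is the product over coordinates $k$ of the sets of distinct $k$-th coordinates of points of $\bigcup_i\xi_i(M)$. *)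

theory Defs
  imports "HOL-Analysis.Analysis"
begin

text \<open>
  A finitely generated free graded module F is given by the list of grades of its
  basis elements, gr :: (real^'n) list (basis element e_j sits in grade gr!j).
  The graded piece F_a is the F-vector space with basis the e_j with gr!j <= a
  (componentwise order); we represent its elements as coefficient functions
  nat => 'f supported on those indices.

  A homogeneous P_n-linear map F' -> F (gr' the grades of F') is given by a
  coefficient matrix c :: nat => nat => 'f, namely e'_k |-> sum_j c j k * x^(gr'!k - gr!j) e_j,
  which requires c j k ~= 0 ==> gr!j <= gr'!k.  In grade a (in the basis above)
  it acts by the matrix c itself.
\<close>

definition graded_piece :: "(real^'n) list \<Rightarrow> real^'n \<Rightarrow> (nat \<Rightarrow> 'f::field) set" where
  "graded_piece gr a = {v. \<forall>j. v j \<noteq> 0 \<longrightarrow> j < length gr \<and> gr ! j \<le> a}"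

definition apply_map :: "(real^'n) list \<Rightarrow> (real^'n) list \<Rightarrow> (nat \<Rightarrow> nat \<Rightarrow> 'f::field)
    \<Rightarrow> (nat \<Rightarrow> 'f) \<Rightarrow> (nat \<Rightarrow> 'f)" where
  "apply_map gr gr' c v = (\<lambda>j. if j < length gr then (\<Sum>k<length gr'. c j k * v k) else 0)"

text \<open>
  A minimal free resolution  ... -> F_2 -> F_1 -> F_0  (of M = coker (F_1 -> F_0)):
  gr i are the grades of the basis of F_i, d i is the matrix of F_(i+1) -> F_i.
  Conditions: homogeneity; minimality (image of d_i lies in I F_i, i.e. no nonzero
  entry between generators of equal grade); exactness at every F_i, i >= 1, checked
  in every grade a (kernel = image).
\<close>

definition minimal_free_resolution ::
    "(nat \<Rightarrow> (real^'n) list) \<Rightarrow> (nat \<Rightarrow> nat \<Rightarrow> nat \<Rightarrow> 'f::field) \<Rightarrow> bool" where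
  "minimal_free_resolution gr d \<longleftrightarrow>
     (\<forall>i j k. j < length (gr i) \<longrightarrow> k < length (gr (Suc i)) \<longrightarrow> d i j k \<noteq> 0 \<longrightarrow>
         gr i ! j \<le> gr (Suc i) ! k \<and> gr i ! j \<noteq> gr (Suc i) ! k) \<and>
     (\<forall>i a. {v \<in> graded_piece (gr (Suc i)) a.
               apply_map (gr i) (gr (Suc i)) (d i) v = (\<lambda>_. 0)}
            = apply_map (gr (Suc i)) (gr (Suc (Suc i))) (d (Suc i))
                ` graded_piece (gr (Suc (Suc i))) a)"

definition xi :: "(nat \<Rightarrow> (real^'n) list) \<Rightarrow> nat \<Rightarrow> (real^'n) set" where
  "xi gr i = set (gr i)"

definition is_join :: "real^'n \<Rightarrow> (real^'n) set \<Rightarrow> bool" where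
  "is_join s R \<longleftrightarrow> finite R \<and> R \<noteq> {} \<and> (\<forall>k. s $ k = Max ((\<lambda>r. r $ k) ` R))"

end

theory Submission
  imports Defs
begin

text \<open>
  Let \<open>e\<close> be a generator of \<open>F\<^sub>j\<^sub>+\<^sub>1\<close> of grade \<open>s\<close> and \<open>t\<close> the join of the grades of the
  generators of \<open>F\<^sub>j\<close> occurring in its boundary \<open>c = d e\<close>, so \<open>t \<le> s\<close> and \<open>c\<close> lives in grade \<open>t\<close>.
  If \<open>t < s\<close>, exactness at \<open>F\<^sub>j\<close> (here \<open>j \<ge> 1\<close> is used) writes \<open>c = d w\<close> with \<open>w\<close> of grade
  \<open>t\<close>; then \<open>e - w\<close> is a cycle of grade \<open>s\<close> whose coefficient at \<open>e\<close> is \<open>1\<close>, so by exactness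
  at \<open>F\<^sub>j\<^sub>+\<^sub>1\<close> it is a boundary with a unit coefficient at a generator of its own grade,
  which minimality forbids. Hence \<open>s = t\<close> is a join of grades in \<open>\<xi>\<^sub>j\<close>, and every
  coordinate of a point of \<open>\<xi>\<^sub>j\<^sub>+\<^sub>1\<close> is a coordinate of a point of \<open>\<xi>\<^sub>j\<close>; induction on \<open>j\<close>
  brings it down to \<open>\<xi>\<^sub>0 \<union> \<xi>\<^sub>1\<close>.
\<close>

definition basis_vector :: "nat \<Rightarrow> nat \<Rightarrow> 'f::field" where
  "basis_vector k = (\<lambda>m. if m = k then 1 else 0)"

lemma basis_vector_in_graded_piece:
  assumes "k < length gr"
  shows "basis_vector k \<in> graded_piece gr (gr ! k)"
  using assms by (simp add: graded_piece_def basis_vector_def)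

lemma graded_piece_mono:
  assumes "a \<le> b"
  shows "graded_piece gr a \<subseteq> graded_piece gr b"
  using assms by (auto simp: graded_piece_def intro: order_trans)

lemma graded_piece_diff:
  assumes "v \<in> graded_piece gr a" and "w \<in> graded_piece gr a"
  shows "(\<lambda>k. v k - w k) \<in> graded_piece gr a"
proof -
  have "v k - w k \<noteq> 0 \<Longrightarrow> v k \<noteq> 0 \<or> w k \<noteq> 0" for k
    by auto
  then show ?thesis
    using assms unfolding graded_piece_def by blast
qed

lemma apply_map_diff:
  "apply_map gr gr' c (\<lambda>k. v k - w k) = (\<lambda>j. apply_map gr gr' c v j - apply_map gr gr' c w j)"
  by (auto simp: apply_map_def right_diff_distrib sum_subtractf)

lemma minimal_free_resolution_homogeneous:
  assumes "minimal_free_resolution gr d"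
    and "j < length (gr i)" "k < length (gr (Suc i))" "d i j k \<noteq> 0"
  shows "gr i ! j \<le> gr (Suc i) ! k" "gr i ! j \<noteq> gr (Suc i) ! k"
  using assms unfolding minimal_free_resolution_def by blast+

lemma minimal_free_resolution_exact:
  assumes "minimal_free_resolution gr d"
  shows "{v \<in> graded_piece (gr (Suc i)) a. apply_map (gr i) (gr (Suc i)) (d i) v = (\<lambda>_. 0)}
       = apply_map (gr (Suc i)) (gr (Suc (Suc i))) (d (Suc i)) ` graded_piece (gr (Suc (Suc i))) a"
  using assms unfolding minimal_free_resolution_def by blast

lemma minimal_free_resolution_boundary_in_graded_piece:
  assumes "minimal_free_resolution gr d" and "w \<in> graded_piece (gr (Suc (Suc i))) a"
  shows "apply_map (gr (Suc i)) (gr (Suc (Suc i))) (d (Suc i)) w \<in> graded_piece (gr (Suc i)) a"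
    and "apply_map (gr i) (gr (Suc i)) (d i)
           (apply_map (gr (Suc i)) (gr (Suc (Suc i))) (d (Suc i)) w) = (\<lambda>_. 0)"
  using assms minimal_free_resolution_exact[of gr d i a] by blast+

lemma minimal_free_resolution_boundary_vanishes_at_own_grade:
  assumes mfr: "minimal_free_resolution gr d"
    and u: "u \<in> graded_piece (gr (Suc i)) a"
    and j: "j < length (gr i)" "gr i ! j = a"
  shows "apply_map (gr i) (gr (Suc i)) (d i) u j = 0"
proof -
  have "d i j m * u m = 0" if "m < length (gr (Suc i))" for m
  proof (rule ccontr)
    assume "d i j m * u m \<noteq> 0"
    then have "d i j m \<noteq> 0" "u m \<noteq> 0" by auto
    then have "a \<le> gr (Suc i) ! m" "a \<noteq> gr (Suc i) ! m" "gr (Suc i) ! m \<le> a"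
      using minimal_free_resolution_homogeneous[OF mfr j(1) that] j(2) u
      by (auto simp: graded_piece_def)
    then show False by simp
  qed
  then show ?thesis
    using j(1) by (auto simp: apply_map_def intro!: sum.neutral)
qed

lemma minimal_free_resolution_boundary_of_generator:
  assumes mfr: "minimal_free_resolution gr d"
    and k: "k < length (gr (Suc (Suc i)))"
    and t: "t \<le> gr (Suc (Suc i)) ! k" "t \<noteq> gr (Suc (Suc i)) ! k"
  shows "apply_map (gr (Suc i)) (gr (Suc (Suc i))) (d (Suc i)) (basis_vector k)
           \<notin> graded_piece (gr (Suc i)) t"
proof
  let ?s = "gr (Suc (Suc i)) ! k"
  let ?d = "apply_map (gr (Suc i)) (gr (Suc (Suc i))) (d (Suc i))"
  assume c_t: "?d (basis_vector k) \<in> graded_piece (gr (Suc i)) t"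
  have e_s: "basis_vector k \<in> graded_piece (gr (Suc (Suc i))) ?s"
    using k by (rule basis_vector_in_graded_piece)
  have "apply_map (gr i) (gr (Suc i)) (d i) (?d (basis_vector k)) = (\<lambda>_. 0)"
    using minimal_free_resolution_boundary_in_graded_piece(2)[OF mfr e_s] .
  then obtain w where w_t: "w \<in> graded_piece (gr (Suc (Suc i))) t"
    and dw: "?d (basis_vector k) = ?d w"
    using c_t minimal_free_resolution_exact[OF mfr, of i t] by blast
  have w_k: "w k = 0"
    using w_t t by (auto simp: graded_piece_def)
  define v where "v = (\<lambda>m. basis_vector k m - w m)"
  have "v \<in> graded_piece (gr (Suc (Suc i))) ?s"
    unfolding v_def using e_s graded_piece_mono[OF t(1)] w_t by (blast intro: graded_piece_diff)
  moreover have "?d v = (\<lambda>_. 0)"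
    unfolding v_def apply_map_diff dw by simp
  ultimately obtain u where u_s: "u \<in> graded_piece (gr (Suc (Suc (Suc i)))) ?s"
    and v_eq: "v = apply_map (gr (Suc (Suc i))) (gr (Suc (Suc (Suc i)))) (d (Suc (Suc i))) u"
    using minimal_free_resolution_exact[OF mfr, of "Suc i" ?s] by blast
  have "v k = 0"
    unfolding v_eq using minimal_free_resolution_boundary_vanishes_at_own_grade[OF mfr u_s k refl] .
  then show False
    using w_k by (simp add: v_def basis_vector_def)
qed

lemma exists_less_vec: "\<exists>t :: real^'n. t \<le> s \<and> t \<noteq> s"
proof (intro exI conjI)
  show "(\<chi> k. s $ k - 1) \<le> s"
    by (simp add: less_eq_vec_def)
  show "(\<chi> k. s $ k - 1) \<noteq> s"
  proof
    assume "(\<chi> k. s $ k - 1) = s"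
    then have "(\<chi> k. s $ k - 1) $ k = s $ k" for k
      by simp
    then show False
      by simp
  qed
qed

text \<open>The join of the grades of the support of \<open>v\<close> is the least grade in which \<open>v\<close> lives.\<close>

lemma graded_piece_join_of_support_or_lower:
  fixes gr :: "(real^'n) list"
  assumes v: "v \<in> graded_piece gr s"
  obtains R where "R \<subseteq> set gr" "is_join s R"
    | t where "t \<le> s" "t \<noteq> s" "v \<in> graded_piece gr t"
proof -
  define R where "R = {gr ! m | m. m < length gr \<and> v m \<noteq> 0}"
  have R_fin: "finite R" and R_sub: "R \<subseteq> set gr"
    by (auto simp: R_def)
  have R_le: "r \<le> s" if "r \<in> R" for r
    using that v by (auto simp: R_def graded_piece_def)
  show thesis
  proof (cases "R = {}")
    case True
    then have "v \<in> graded_piece gr t" for t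
      using v by (auto simp: R_def graded_piece_def)
    moreover obtain t :: "real^'n" where "t \<le> s" "t \<noteq> s"
      using exists_less_vec by blast
    ultimately show thesis
      using that(2) by blast
  next
    case False
    define t :: "real^'n" where "t = (\<chi> k. Max ((\<lambda>r. r $ k) ` R))"
    have "t \<le> s"
      using R_fin False R_le by (simp add: t_def less_eq_vec_def)
    moreover have "v \<in> graded_piece gr t"
      unfolding graded_piece_def
    proof (intro CollectI allI impI conjI)
      fix m assume vm: "v m \<noteq> 0"
      show m: "m < length gr"
        using v vm by (auto simp: graded_piece_def)
      have "gr ! m \<in> R"
        using m vm by (auto simp: R_def)
      then show "gr ! m \<le> t"
        using R_fin by (simp add: t_def less_eq_vec_def)
    qed
    moreover have "is_join t R"
      using R_fin False by (simp add: is_join_def t_def)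
    ultimately show thesis
      using that R_sub by blast
  qed
qed

lemma minimal_free_resolution_xi_join:
  assumes mfr: "minimal_free_resolution gr d" and s: "s \<in> xi gr (Suc (Suc i))"
  shows "\<exists>R. R \<subseteq> xi gr (Suc i) \<and> is_join s R"
proof -
  obtain k where k: "k < length (gr (Suc (Suc i)))" "gr (Suc (Suc i)) ! k = s"
    using s by (auto simp: xi_def in_set_conv_nth)
  have "apply_map (gr (Suc i)) (gr (Suc (Suc i))) (d (Suc i)) (basis_vector k)
          \<in> graded_piece (gr (Suc i)) s"
    using minimal_free_resolution_boundary_in_graded_piece(1)[OF mfr]
      basis_vector_in_graded_piece[OF k(1)] k(2) by blast
  then show ?thesis
    using minimal_free_resolution_boundary_of_generator[OF mfr k(1)] k(2)
    by (cases rule: graded_piece_join_of_support_or_lower) (auto simp: xi_def)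
qed

lemma is_join_coordinate:
  assumes "is_join s R"
  shows "s $ k \<in> (\<lambda>r. r $ k) ` R"
  using assms unfolding is_join_def by (metis Max_in finite_imageI image_is_empty)

lemma coordinates_of_joins_from_first_two:
  fixes X :: "nat \<Rightarrow> (real^'n) set"
  assumes join: "\<And>j s. j \<ge> 1 \<Longrightarrow> s \<in> X (Suc j) \<Longrightarrow> \<exists>R. R \<subseteq> X j \<and> is_join s R"
    and p: "p \<in> X i"
  shows "p $ k \<in> (\<lambda>p. p $ k) ` (X 0 \<union> X 1)"
proof -
  have "\<forall>p \<in> X (Suc i). p $ k \<in> (\<lambda>p. p $ k) ` (X 0 \<union> X 1)" for i
  proof (induction i)
    case (Suc i)
    show ?case
    proof
      fix p assume "p \<in> X (Suc (Suc i))"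
      then obtain R where "R \<subseteq> X (Suc i)" "is_join p R"
        using join[of "Suc i"] by auto
      then show "p $ k \<in> (\<lambda>p. p $ k) ` (X 0 \<union> X 1)"
        using Suc.IH is_join_coordinate[of p R k] by auto
    qed
  qed auto
  with p show ?thesis
    by (cases i) auto
qed

theorem mainTheorem4:
  fixes gr :: "nat \<Rightarrow> (real^'n) list" and d :: "nat \<Rightarrow> nat \<Rightarrow> nat \<Rightarrow> 'f::field"
  assumes "minimal_free_resolution gr d"
  shows "(\<forall>j\<ge>1. \<forall>s \<in> xi gr (Suc j). \<exists>R. R \<subseteq> xi gr j \<and> is_join s R)
       \<and> (\<forall>k. (\<lambda>p. p $ k) ` (\<Union>i. xi gr i) = (\<lambda>p. p $ k) ` (xi gr 0 \<union> xi gr 1))"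
proof (intro conjI allI impI ballI)
  show join: "\<exists>R. R \<subseteq> xi gr j \<and> is_join s R" if "j \<ge> 1" "s \<in> xi gr (Suc j)" for j s
    using that minimal_free_resolution_xi_join[OF assms] by (cases j) auto
  show "(\<lambda>p. p $ k) ` (\<Union>i. xi gr i) = (\<lambda>p. p $ k) ` (xi gr 0 \<union> xi gr 1)" for k
    using coordinates_of_joins_from_first_two[of "xi gr", OF join] by blast
qed

end
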